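(* Let $f,g:\mathbb{R}^{N}\rightarrow (-\infty ,\infty ]$ be Borel measurable with $m_{f}:=\inf f\in \mathbb{R}$, $m_{g}:=\inf g\in \mathbb{R}$ and $m_{f}+m_{g}\geq 0$. Set $m_{f,g}:=(m_{f}-m_{g})/2$. Then $f-m_{f,g}$, $g+m_{f,g}$ and $f\Box g$ are (Lebesgue) measurable and nonnegative, and $$\|(f-m_{f,g})^{-1}\|_{\phi }+\|(g+m_{f,g})^{-1}\|_{\phi }\leq 4\|(f\Box g)^{-1}\|_{\phi }$$ for every Young function $\phi$.
   Context: The infimal convolution is $(f\Box g)(x):=\inf_{y\in \mathbb{R}^{N}}(f(x-y)+g(y))$. For a function $h\ge 0$, $h^{-1}$ denotes $1/h$ (with $1/0=\infty$, $1/\infty=0$), not a set-theoretic inverse. A Young function is a nonconstant function $\phi:[0,\infty]\to[0,\infty]$ with $\phi(0)=0$ which is nondecreasing, convex and left continuous. For measurable $h$ on $\mathbb{R}^N$, the Luxemburg norm is $\|h\|_{\phi}:=\inf\{r>0:\int_{\mathbb{R}^N}\phi(r^{-1}|h|)\le 1\}$, with the convention $\|h\|_\phi=\infty$ if no such $r$ exists. Measurability means Lebesgue measurability. *)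

theory Defs
  imports "HOL-Analysis.Analysis"
begin

definition inf_conv :: "('a::ab_group_add \<Rightarrow> ereal) \<Rightarrow> ('a \<Rightarrow> ereal) \<Rightarrow> 'a \<Rightarrow> ereal" where
  "inf_conv f g x = (INF y. f (x - y) + g y)"

text \<open>Reciprocal h^{-1} = 1/h of a nonnegative extended-real function, with 1/0 = inf, 1/inf = 0.\<close>
definition recip :: "('a \<Rightarrow> ereal) \<Rightarrow> 'a \<Rightarrow> ennreal" where
  "recip h x = inverse (e2ennreal (h x))"

definition young_function :: "(ennreal \<Rightarrow> ennreal) \<Rightarrow> bool" where
  "young_function \<phi> \<longleftrightarrow>
     (\<exists>a b. \<phi> a \<noteq> \<phi> b) \<and> \<phi> 0 = 0 \<and> mono \<phi> \<and>
     (\<forall>a b t. 0 \<le> t \<and> t \<le> 1 \<longrightarrow>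
        \<phi> (ennreal t * a + ennreal (1 - t) * b) \<le> ennreal t * \<phi> a + ennreal (1 - t) * \<phi> b) \<and>
     (\<forall>x. (\<phi> \<longlongrightarrow> \<phi> x) (at_left x))"

text \<open>Luxemburg norm w.r.t. Lebesgue measure; Inf of the empty set in ennreal is top (= inf).\<close>
definition luxemburg_norm :: "(ennreal \<Rightarrow> ennreal) \<Rightarrow> ('a::euclidean_space \<Rightarrow> ennreal) \<Rightarrow> ennreal" where
  "luxemburg_norm \<phi> h =
     Inf {ennreal r | r. r > 0 \<and> (\<integral>\<^sup>+ x. \<phi> (ennreal (1 / r) * h x) \<partial>lebesgue) \<le> 1}"

end

theory Submission
  imports Defs
begin

text \<open>Put \<open>c = (mf + mg) / 2 \<ge> 0\<close>. After the shift, \<open>F = f - mfg\<close> and \<open>G = g + mfg\<close> are both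
  bounded below by \<open>c\<close>, and \<open>(f \<box> g) (z + y) \<le> f z + g y = F z + G y\<close>. Choosing \<open>y\<close> with
  \<open>G y \<le> c + \<epsilon>\<close> gives \<open>(f \<box> g) (z + y) \<le> 2 F z + \<epsilon>\<close>, so \<open>1/(2F + \<epsilon>)\<close> is dominated by a translate
  of \<open>1/(f \<box> g)\<close>. Monotonicity, translation invariance, homogeneity and the Fatou property of the
  Luxemburg norm then give \<open>\<parallel>1/F\<parallel> \<le> 2 \<parallel>1/(f \<box> g)\<parallel>\<close>, and symmetrically for \<open>G\<close>.

  The delicate point is the measurability of \<open>f \<box> g\<close>: its strict sublevel sets are projections of
  Borel subsets of \<open>\<real>\<^sup>N \<times> \<real>\<^sup>N\<close>. Borel sets are obtained from closed sets by the Suslin operation,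
  which commutes with continuous images once the scheme is made compact and monotone, and which
  preserves measurability with respect to a complete measure.\<close>

section \<open>The Suslin operation and complete measures\<close>

definition suslin :: "(nat list \<Rightarrow> 'a set) \<Rightarrow> 'a set" where
  "suslin S = {x. \<exists>\<sigma>. \<forall>n. x \<in> S (map \<sigma> [0..<n])}"

lemma map_upt_Suc_Cons: "map \<sigma> [0..<Suc n] = \<sigma> 0 # map (\<lambda>i. \<sigma> (Suc i)) [0..<n]"
  by (simp add: upt_conv_Cons map_Suc_upt[symmetric] del: upt_Suc)

lemma suslin_mono: "(\<And>s. S s \<subseteq> T s) \<Longrightarrow> suslin S \<subseteq> suslin T"
  unfolding suslin_def by blast

lemma suslin_subset_Nil: "suslin S \<subseteq> S []"
proof
  fix x assume "x \<in> suslin S"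
  then obtain \<sigma> where "\<forall>n. x \<in> S (map \<sigma> [0..<n])" by (auto simp: suslin_def)
  from this[rule_format, of 0] show "x \<in> S []" by simp
qed

lemma suslin_subset_UN_Cons: "suslin S \<subseteq> (\<Union>k. suslin (\<lambda>t. S (k # t)))"
proof
  fix x assume "x \<in> suslin S"
  then obtain \<sigma> where "\<forall>n. x \<in> S (map \<sigma> [0..<n])" by (auto simp: suslin_def)
  then have "\<forall>n. x \<in> S (\<sigma> 0 # map (\<lambda>i. \<sigma> (Suc i)) [0..<n])"
    by (metis map_upt_Suc_Cons)
  then show "x \<in> (\<Union>k. suslin (\<lambda>t. S (k # t)))" by (auto simp: suslin_def)
qed

lemma suslin_Int: "suslin (\<lambda>s. S s \<inter> K) = suslin S \<inter> K"
  using suslin_subset_Nil[of "\<lambda>s. S s \<inter> K"] unfolding suslin_def by blast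

lemma suslinI_extend:
  assumes "x \<in> S []" and extend: "\<And>s. x \<in> S s \<Longrightarrow> \<exists>k. x \<in> S (s @ [k])"
  shows "x \<in> suslin S"
proof -
  define next_index where "next_index s = (SOME k. x \<in> S (s @ [k]))" for s
  define prefix where "prefix = rec_nat [] (\<lambda>_ s. s @ [next_index s])"
  have prefix_Suc: "prefix (Suc n) = prefix n @ [next_index (prefix n)]" for n
    by (simp add: prefix_def)
  have in_prefix: "x \<in> S (prefix n)" for n
  proof (induction n)
    case 0 then show ?case using assms(1) by (simp add: prefix_def)
  next
    case (Suc n)
    then show ?case
      unfolding prefix_Suc next_index_def by (rule someI_ex[OF extend])
  qed
  define \<sigma> where "\<sigma> i = next_index (prefix i)" for i
  have "prefix n = map \<sigma> [0..<n]" for n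
    by (induction n) (simp_all add: prefix_Suc \<sigma>_def, simp add: prefix_def)
  then show ?thesis using in_prefix unfolding suslin_def by auto
qed

lemma exists_min_measure_superset:
  assumes K: "K \<in> sets M" "emeasure M K < \<infinity>" and "A \<subseteq> K"
  shows "\<exists>H\<in>sets M. A \<subseteq> H \<and> H \<subseteq> K \<and>
    (\<forall>X\<in>sets M. A \<subseteq> X \<longrightarrow> X \<subseteq> K \<longrightarrow> measure M H \<le> measure M X)"
proof -
  define C where "C = {measure M X | X. X \<in> sets M \<and> A \<subseteq> X \<and> X \<subseteq> K}"
  have Kf: "K \<in> fmeasurable M" using K by (simp add: fmeasurable_def)
  have "C \<noteq> {}" using K \<open>A \<subseteq> K\<close> unfolding C_def by blast
  have "\<exists>X. X \<in> sets M \<and> A \<subseteq> X \<and> X \<subseteq> K \<and> measure M X < Inf C + 1 / Suc n" for n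
  proof -
    have "Inf C < Inf C + 1 / Suc n" by simp
    from cInf_lessD[OF \<open>C \<noteq> {}\<close> this] show ?thesis unfolding C_def by blast
  qed
  then obtain X where X: "\<And>n. X n \<in> sets M" "\<And>n. A \<subseteq> X n" "\<And>n. X n \<subseteq> K"
    and X_measure: "\<And>n. measure M (X n) < Inf C + 1 / Suc n"
    by metis
  define H where "H = (\<Inter>n. X n)"
  have H: "H \<in> sets M" "A \<subseteq> H" "H \<subseteq> K"
    using X(1,2) X(3)[of 0] unfolding H_def by auto
  have H_le: "measure M H \<le> Inf C"
  proof (rule field_le_epsilon)
    fix e :: real assume "e > 0"
    then obtain n where n: "inverse (real (Suc n)) < e" using reals_Archimedean by blast
    have "H \<subseteq> X n" unfolding H_def by blast
    then have "measure M H \<le> measure M (X n)"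
      using X(1) H(1) fmeasurableI2[OF Kf X(3) X(1)] by (intro measure_mono_fmeasurable) auto
    then show "measure M H \<le> Inf C + e" using X_measure[of n] n by (simp add: inverse_eq_divide)
  qed
  have Inf_le: "Inf C \<le> measure M X" if "X \<in> sets M" "A \<subseteq> X" "X \<subseteq> K" for X
  proof (rule cInf_lower)
    show "measure M X \<in> C" unfolding C_def using that by blast
    show "bdd_below C" unfolding C_def by (rule bdd_belowI[of _ 0]) auto
  qed
  have "measure M H \<le> measure M X" if "X \<in> sets M" "A \<subseteq> X" "X \<subseteq> K" for X
    using H_le Inf_le[OF that] by (rule order_trans)
  then show ?thesis using H by blast
qed

lemma exists_measurable_hull:
  assumes K: "K \<in> sets M" "emeasure M K < \<infinity>" and "A \<subseteq> K"
  shows "\<exists>H\<in>sets M. A \<subseteq> H \<and> H \<subseteq> K \<and> (\<forall>N\<in>sets M. A \<subseteq> N \<longrightarrow> H - N \<in> null_sets M)"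
proof -
  obtain H where H: "H \<in> sets M" "A \<subseteq> H" "H \<subseteq> K"
    and H_min: "\<forall>X\<in>sets M. A \<subseteq> X \<longrightarrow> X \<subseteq> K \<longrightarrow> measure M H \<le> measure M X"
    using exists_min_measure_superset[OF assms] by blast
  have "H - N \<in> null_sets M" if N: "N \<in> sets M" "A \<subseteq> N" for N
  proof -
    have "K \<in> fmeasurable M" using K by (simp add: fmeasurable_def)
    then have Hf: "H \<in> fmeasurable M" by (rule fmeasurableI2[OF _ H(3) H(1)])
    have HN: "H - N \<in> fmeasurable M" using H(1) N(1) by (intro fmeasurableI2[OF Hf]) auto
    have "measure M (H - N) = measure M H - measure M (H \<inter> N)"
    proof -
      have "H - H \<inter> N = H - N" by blast
      then show ?thesis using measure_Diff[of M H "H \<inter> N"] fmeasurableD2[OF Hf] H(1) N(1) by auto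
    qed
    also have "\<dots> \<le> 0" using H_min H N by (auto dest: bspec[of _ _ "H \<inter> N"])
    finally have "measure M (H - N) = 0" using measure_nonneg[of M "H - N"] by linarith
    then have "emeasure M (H - N) = 0" using HN by (simp add: emeasure_eq_measure2)
    then show ?thesis using HN by (auto intro: null_setsI)
  qed
  then show ?thesis using H by blast
qed

lemma root_Diff_exits_subset_suslin: "H [] - (\<Union>s. H s - (\<Union>k. H (s @ [k]))) \<subseteq> suslin H"
proof
  fix x assume x: "x \<in> H [] - (\<Union>s. H s - (\<Union>k. H (s @ [k])))"
  show "x \<in> suslin H"
  proof (rule suslinI_extend)
    show "\<exists>k. x \<in> H (s @ [k])" if "x \<in> H s" for s
      using that x by blast
  qed (use x in blast)
qed

lemma (in complete_measure) suslin_in_sets_bounded: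
  assumes K: "K \<in> sets M" "emeasure M K < \<infinity>" and S: "\<And>s. S s \<in> sets M" "\<And>s. S s \<subseteq> K"
  shows "suslin S \<in> sets M"
proof -
  define A where "A s = suslin (\<lambda>t. S (s @ t))" for s
  have "\<forall>s. \<exists>H\<in>sets M. A s \<subseteq> H \<and> H \<subseteq> S s \<and> (\<forall>N\<in>sets M. A s \<subseteq> N \<longrightarrow> H - N \<in> null_sets M)"
  proof
    fix s
    have "emeasure M (S s) < \<infinity>" using K S by (metis emeasure_mono le_less_trans)
    moreover have "A s \<subseteq> S s" using suslin_subset_Nil[of "\<lambda>t. S (s @ t)"] by (simp add: A_def)
    ultimately show "\<exists>H\<in>sets M. A s \<subseteq> H \<and> H \<subseteq> S s \<and> (\<forall>N\<in>sets M. A s \<subseteq> N \<longrightarrow> H - N \<in> null_sets M)"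
      by (rule exists_measurable_hull[OF S(1)])
  qed
  then obtain H where "\<forall>s. H s \<in> sets M \<and> A s \<subseteq> H s \<and> H s \<subseteq> S s
      \<and> (\<forall>N\<in>sets M. A s \<subseteq> N \<longrightarrow> H s - N \<in> null_sets M)"
    unfolding Bex_def by (metis choice)
  then have H: "\<And>s. H s \<in> sets M" "\<And>s. A s \<subseteq> H s" "\<And>s. H s \<subseteq> S s"
    and H_hull: "\<And>s N. N \<in> sets M \<Longrightarrow> A s \<subseteq> N \<Longrightarrow> H s - N \<in> null_sets M"
    by blast+
  \<comment> \<open>The exit sets \<open>D s\<close> are null because \<open>A s\<close> is covered by the tails of its children.\<close>
  define D where "D s = H s - (\<Union>k. H (s @ [k]))" for s
  have "D s \<in> null_sets M" for s
  proof -
    have "A s \<subseteq> (\<Union>k. A (s @ [k]))"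
      using suslin_subset_UN_Cons[of "\<lambda>t. S (s @ t)"] by (simp add: A_def)
    then have "A s \<subseteq> (\<Union>k. H (s @ [k]))" using H(2) by blast
    moreover have "(\<Union>k. H (s @ [k])) \<in> sets M" using H(1) by blast
    ultimately show ?thesis unfolding D_def by (rule H_hull[rotated])
  qed
  then have null: "(\<Union>s. D s) \<in> null_sets M" by (intro null_sets_UN') auto
  have "H [] - suslin S \<subseteq> (\<Union>s. D s)"
    using root_Diff_exits_subset_suslin[of H] suslin_mono[of H S, OF H(3)] unfolding D_def by blast
  then have "H [] - suslin S \<in> sets M" using null by (rule complete)
  moreover have "suslin S \<subseteq> H []" using H(2)[of "[]"] by (simp add: A_def)
  ultimately have "H [] - (H [] - suslin S) \<in> sets M" using H(1) by blast
  moreover have "H [] - (H [] - suslin S) = suslin S" using \<open>suslin S \<subseteq> H []\<close> by blast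
  ultimately show ?thesis by simp
qed

lemma suslin_in_sets_lebesgue:
  fixes S :: "nat list \<Rightarrow> 'a::euclidean_space set"
  assumes S: "\<And>s. S s \<in> sets lebesgue"
  shows "suslin S \<in> sets lebesgue"
proof -
  have "suslin S \<inter> cball 0 (real r) \<in> sets lebesgue" for r :: nat
    unfolding suslin_Int[symmetric]
  proof (rule completion.suslin_in_sets_bounded)
    show "emeasure lebesgue (cball (0::'a) (real r)) < \<infinity>"
      using lmeasurable_cball[of "0::'a" "real r"] by (simp add: fmeasurable_def)
  qed (use S in \<open>auto intro: sets.Int\<close>)
  then have "(\<Union>r::nat. suslin S \<inter> cball 0 (real r)) \<in> sets lebesgue"
    by (intro sets.countable_UN) auto
  moreover have "(\<Union>r::nat. suslin S \<inter> cball 0 (real r)) = suslin S"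
  proof -
    have "\<exists>r::nat. norm x \<le> real r" for x :: 'a by (rule real_arch_simple)
    then show ?thesis by (auto simp: dist_norm)
  qed
  ultimately show ?thesis by simp
qed

section \<open>Suslin sets of closed sets\<close>

definition closed_suslin :: "'a::topological_space set set" where
  "closed_suslin = {suslin S | S. \<forall>s. closed (S s)}"

lemma closed_in_closed_suslin: "closed C \<Longrightarrow> C \<in> closed_suslin"
  unfolding closed_suslin_def suslin_def by (rule CollectI, rule exI[of _ "\<lambda>_. C"]) auto

lemma closed_suslin_UN:
  assumes "\<And>i::nat. B i \<in> closed_suslin"
  shows "(\<Union>i. B i) \<in> closed_suslin"
proof -
  have "\<forall>i. \<exists>S. B i = suslin S \<and> (\<forall>s. closed (S s))"
    using assms unfolding closed_suslin_def by blast
  then obtain S where S: "\<And>i. B i = suslin (S i)" "\<And>i s. closed (S i s)" by metis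
  define T where "T s = (case s of [] \<Rightarrow> UNIV | i # t \<Rightarrow> S i t)" for s
  have "suslin T = (\<Union>i. suslin (S i))"
  proof
    show "suslin T \<subseteq> (\<Union>i. suslin (S i))"
      using suslin_subset_UN_Cons[of T] by (simp add: T_def)
    show "(\<Union>i. suslin (S i)) \<subseteq> suslin T"
    proof
      fix x assume "x \<in> (\<Union>i. suslin (S i))"
      then obtain i \<tau> where \<tau>: "\<forall>m. x \<in> S i (map \<tau> [0..<m])" by (auto simp: suslin_def)
      have "x \<in> T (map (case_nat i \<tau>) [0..<n])" for n
        using \<tau> by (cases n) (simp_all only: map_upt_Suc_Cons, simp_all add: T_def)
      then show "x \<in> suslin T" by (auto simp: suslin_def)
    qed
  qed
  moreover have "closed (T s)" for s by (cases s) (auto simp: T_def S)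
  ultimately show ?thesis using S unfolding closed_suslin_def by auto
qed

lemma prod_encode_strict_mono2: "j < m \<Longrightarrow> prod_encode (i, j) < prod_encode (i, m)"
proof -
  have "triangle a < triangle b" if "a < b" for a b
    using that by (induction b) (auto simp: less_Suc_eq)
  then show "j < m \<Longrightarrow> ?thesis" by (simp add: prod_encode_def)
qed

text \<open>Countably many branches are interleaved along the Cantor pairing: the \<open>j\<close>-th index of the
  \<open>i\<close>-th branch sits at position \<open>prod_encode (i, j)\<close>.\<close>

definition interleave :: "(nat \<Rightarrow> nat list \<Rightarrow> 'a set) \<Rightarrow> nat list \<Rightarrow> 'a set" where
  "interleave S s = \<Inter>{S i (map (\<lambda>j. s ! prod_encode (i, j)) [0..<m]) | i m.
    \<forall>j<m. prod_encode (i, j) < length s}"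

lemma suslin_interleave_subset: "suslin (interleave S) \<subseteq> suslin (S i)"
proof
  fix x assume "x \<in> suslin (interleave S)"
  then obtain \<sigma> where \<sigma>: "\<forall>n. x \<in> interleave S (map \<sigma> [0..<n])" by (auto simp: suslin_def)
  have "x \<in> S i (map (\<lambda>j. \<sigma> (prod_encode (i, j))) [0..<m])" for m
  proof -
    define s where "s = map \<sigma> [0..<prod_encode (i, m)]"
    have "\<forall>j<m. prod_encode (i, j) < length s" by (simp add: s_def prod_encode_strict_mono2)
    then have "x \<in> S i (map (\<lambda>j. s ! prod_encode (i, j)) [0..<m])"
      using \<sigma> unfolding interleave_def s_def by blast
    moreover have "map (\<lambda>j. s ! prod_encode (i, j)) [0..<m] = map (\<lambda>j. \<sigma> (prod_encode (i, j))) [0..<m]"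
      by (auto simp: s_def prod_encode_strict_mono2)
    ultimately show ?thesis by simp
  qed
  then show "x \<in> suslin (S i)" by (auto simp: suslin_def)
qed

lemma INT_suslin_subset_suslin_interleave: "(\<Inter>i. suslin (S i)) \<subseteq> suslin (interleave S)"
proof
  fix x assume "x \<in> (\<Inter>i. suslin (S i))"
  then have "\<forall>i. \<exists>\<tau>. \<forall>m. x \<in> S i (map \<tau> [0..<m])" by (auto simp: suslin_def)
  then obtain \<tau> where \<tau>: "\<And>i m. x \<in> S i (map (\<tau> i) [0..<m])" by metis
  define \<sigma> where "\<sigma> p = (case prod_decode p of (i, j) \<Rightarrow> \<tau> i j)" for p
  have "x \<in> interleave S (map \<sigma> [0..<n])" for n
    unfolding interleave_def
  proof (rule InterI)
    fix X assume "X \<in> {S i (map (\<lambda>j. map \<sigma> [0..<n] ! prod_encode (i, j)) [0..<m]) | i m.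
      \<forall>j<m. prod_encode (i, j) < length (map \<sigma> [0..<n])}"
    then obtain i m where X: "X = S i (map (\<lambda>j. map \<sigma> [0..<n] ! prod_encode (i, j)) [0..<m])"
      and lt: "\<forall>j<m. prod_encode (i, j) < n" by auto
    have "map (\<lambda>j. map \<sigma> [0..<n] ! prod_encode (i, j)) [0..<m] = map (\<tau> i) [0..<m]"
      using lt by (auto simp: \<sigma>_def)
    then show "x \<in> X" using \<tau>[of i m] by (simp only: X)
  qed
  then show "x \<in> suslin (interleave S)" by (auto simp: suslin_def)
qed

lemma closed_suslin_INT:
  assumes "\<And>i::nat. B i \<in> closed_suslin"
  shows "(\<Inter>i. B i) \<in> closed_suslin"
proof -
  have "\<forall>i. \<exists>S. B i = suslin S \<and> (\<forall>s. closed (S s))"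
    using assms unfolding closed_suslin_def by blast
  then obtain S where S: "\<And>i. B i = suslin (S i)" "\<And>i s. closed (S i s)" by metis
  have "(\<Inter>i. B i) = suslin (interleave S)"
    unfolding S(1) by (intro equalityI INT_greatest suslin_interleave_subset INT_suslin_subset_suslin_interleave)
  moreover have "\<forall>s. closed (interleave S s)"
    unfolding interleave_def using S(2) by (auto intro: closed_Inter)
  ultimately show ?thesis unfolding closed_suslin_def by blast
qed

lemma open_in_closed_suslin:
  fixes U :: "'a::metric_space set"
  assumes "open U"
  shows "U \<in> closed_suslin"
proof (cases "U = UNIV")
  case True then show ?thesis by (simp add: closed_in_closed_suslin)
next
  case False
  define V where "V n = {x. inverse (real (Suc n)) \<le> infdist x (- U)}" for n
  have "U = (\<Union>n. V n)"
  proof (intro equalityI subsetI)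
    fix x assume "x \<in> U"
    then have "x \<notin> closure (- U)" using assms by (simp add: closed_open)
    then have "infdist x (- U) \<noteq> 0" using in_closure_iff_infdist_zero[of "- U" x] False by auto
    then have "infdist x (- U) > 0" using infdist_nonneg[of x "- U"] by linarith
    then obtain n where "inverse (real (Suc n)) < infdist x (- U)" using reals_Archimedean by blast
    then show "x \<in> (\<Union>n. V n)" unfolding V_def by (blast intro: less_imp_le)
  next
    fix x assume "x \<in> (\<Union>n. V n)"
    then obtain n where "inverse (real (Suc n)) \<le> infdist x (- U)" unfolding V_def by blast
    then have "0 < infdist x (- U)" by (rule less_le_trans[rotated]) simp
    then show "x \<in> U" using infdist_zero[of x "- U"] by (cases "x \<in> U") auto
  qed
  moreover have "V n \<in> closed_suslin" for n
    unfolding V_def by (intro closed_in_closed_suslin closed_Collect_le continuous_intros)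
  ultimately show ?thesis using closed_suslin_UN[of V] by simp
qed

lemma sets_borel_subset_closed_suslin:
  "sets (borel :: 'a::metric_space measure) \<subseteq> closed_suslin"
proof
  fix B :: "'a set" assume "B \<in> sets borel"
  then have "B \<in> sigma_sets UNIV {S. open S}" by (simp add: sets_borel)
  then have "B \<in> closed_suslin \<and> - B \<in> closed_suslin"
  proof (induction rule: sigma_sets.induct)
    case (Basic a) then show ?case by (auto intro: open_in_closed_suslin closed_in_closed_suslin)
  next
    case Empty then show ?case by (auto intro: closed_in_closed_suslin)
  next
    case (Compl a) then show ?case by (simp add: Compl_eq_Diff_UNIV[symmetric])
  next
    case (Union a)
    then show ?case by (auto intro: closed_suslin_UN closed_suslin_INT)
  qed
  then show "B \<in> closed_suslin" by simp
qed

section \<open>Continuous images of Suslin sets\<close>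

lemma suslin_INT_prefixes: "suslin (\<lambda>s. \<Inter>k\<in>{..length s}. S (take k s)) = suslin S"
proof
  show "suslin (\<lambda>s. \<Inter>k\<in>{..length s}. S (take k s)) \<subseteq> suslin S"
    by (rule suslin_mono) auto
  show "suslin S \<subseteq> suslin (\<lambda>s. \<Inter>k\<in>{..length s}. S (take k s))"
  proof
    fix x assume "x \<in> suslin S"
    then obtain \<sigma> where "\<forall>n. x \<in> S (map \<sigma> [0..<n])" by (auto simp: suslin_def)
    moreover have "take k (map \<sigma> [0..<n]) = map \<sigma> [0..<k]" if "k \<le> n" for k n
      using that by (simp add: take_map)
    ultimately show "x \<in> suslin (\<lambda>s. \<Inter>k\<in>{..length s}. S (take k s))"
      unfolding suslin_def by (auto intro!: exI[of _ \<sigma>])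
  qed
qed

text \<open>A point \<open>x\<close> of \<open>suslin (\<lambda>s. f ` T s)\<close> along a branch \<open>\<sigma>\<close> has a preimage in the nonempty
  intersection of the nested compact sets \<open>T (\<sigma>|n) \<inter> f -` {x}\<close>.\<close>

lemma image_suslin_compact:
  fixes T :: "nat list \<Rightarrow> 'a::heine_borel set" and f :: "'a \<Rightarrow> 'b::t2_space"
  assumes f: "continuous_on UNIV f"
    and T_mono: "\<And>s k. T (s @ [k]) \<subseteq> T s" and T_compact: "\<And>s. compact (T s)"
  shows "f ` suslin T = suslin (\<lambda>s. f ` T s)"
proof
  show "f ` suslin T \<subseteq> suslin (\<lambda>s. f ` T s)" by (auto simp: suslin_def)
  show "suslin (\<lambda>s. f ` T s) \<subseteq> f ` suslin T"
  proof
    fix x assume "x \<in> suslin (\<lambda>s. f ` T s)"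
    then obtain \<sigma> where \<sigma>: "\<And>n. x \<in> f ` T (map \<sigma> [0..<n])" by (auto simp: suslin_def)
    define F where "F n = T (map \<sigma> [0..<n]) \<inter> f -` {x}" for n
    have "\<Inter>(range F) \<noteq> {}"
    proof (rule compact_nest)
      show "compact (F n)" for n
        unfolding F_def using T_compact f by (intro compact_Int_closed closed_vimage) auto
      show "F n \<noteq> {}" for n using \<sigma>[of n] by (auto simp: F_def)
      show "F n \<subseteq> F m" if "m \<le> n" for m n
        using that
      proof (induction n)
        case (Suc n)
        then show ?case using T_mono[of "map \<sigma> [0..<n]" "\<sigma> n"] by (auto simp: F_def le_Suc_eq)
      qed simp
    qed
    then obtain p where "\<And>n. p \<in> F n" by blast
    then show "x \<in> f ` suslin T" by (force simp: F_def suslin_def)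
  qed
qed

lemma continuous_image_closed_suslin_lebesgue:
  fixes f :: "'a::{heine_borel, real_normed_vector} \<Rightarrow> 'b::euclidean_space"
  assumes f: "continuous_on UNIV f" and "A \<in> closed_suslin"
  shows "f ` A \<in> sets lebesgue"
proof -
  obtain S where A: "A = suslin S" and S: "\<And>s. closed (S s)"
    using \<open>A \<in> closed_suslin\<close> by (auto simp: closed_suslin_def)
  define T where "T m s = (\<Inter>k\<in>{..length s}. S (take k s)) \<inter> cball 0 (real m)" for m s
  have "f ` (A \<inter> cball 0 (real m)) \<in> sets lebesgue" for m
  proof -
    have "A \<inter> cball 0 (real m) = suslin (T m)"
      unfolding A T_def suslin_Int suslin_INT_prefixes ..
    moreover have "T m (s @ [j]) \<subseteq> T m s" for s j
      unfolding T_def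
    proof (intro Int_mono INT_greatest order_refl)
      fix k assume "k \<in> {..length s}"
      then have "k \<in> {..length (s @ [j])}" "take k (s @ [j]) = take k s" by auto
      then show "(\<Inter>k\<in>{..length (s @ [j])}. S (take k (s @ [j]))) \<subseteq> S (take k s)"
        by (metis INT_lower)
    qed
    moreover have "compact (T m s)" for s
      unfolding T_def using S by (intro closed_Int_compact closed_INT compact_cball) auto
    ultimately have "f ` (A \<inter> cball 0 (real m)) = suslin (\<lambda>s. f ` T m s)"
      using image_suslin_compact[OF f] by metis
    moreover have "f ` T m s \<in> sets lebesgue" for s
    proof -
      have "compact (f ` T m s)"
        using \<open>compact (T m s)\<close> continuous_on_subset[OF f] by (intro compact_continuous_image) auto
      then have "f ` T m s \<in> sets borel" by (intro borel_closed compact_imp_closed)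
      then show ?thesis by auto
    qed
    ultimately show ?thesis by (simp add: suslin_in_sets_lebesgue)
  qed
  then have "(\<Union>m::nat. f ` (A \<inter> cball 0 (real m))) \<in> sets lebesgue"
    by (intro sets.countable_UN) auto
  moreover have "(\<Union>m::nat. A \<inter> cball 0 (real m)) = A"
  proof -
    have "\<exists>m::nat. norm x \<le> real m" for x :: 'a by (rule real_arch_simple)
    then show ?thesis by (auto simp: dist_norm)
  qed
  ultimately show ?thesis by (metis image_UN)
qed

lemma borel_measurable_lebesgue_INF_borel:
  fixes F :: "'a::euclidean_space \<times> 'b::euclidean_space \<Rightarrow> 'c::{complete_linorder, linorder_topology, second_countable_topology}"
  assumes F: "F \<in> borel_measurable borel"
  shows "(\<lambda>x. INF y. F (x, y)) \<in> borel_measurable lebesgue"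
proof (rule borel_measurableI_less)
  fix a
  have "{p. F p < a} \<in> sets borel" using F by measurable
  then have "fst ` {p. F p < a} \<in> sets lebesgue"
    using sets_borel_subset_closed_suslin
    by (intro continuous_image_closed_suslin_lebesgue continuous_on_fst continuous_on_id) blast+
  moreover have "fst ` {p. F p < a} = {x \<in> space lebesgue. (INF y. F (x, y)) < a}"
    by (force simp: INF_less_iff)
  ultimately show "{x \<in> space lebesgue. (INF y. F (x, y)) < a} \<in> sets lebesgue" by simp
qed

lemma inf_conv_borel_measurable_lebesgue:
  fixes f g :: "'a::euclidean_space \<Rightarrow> ereal"
  assumes [measurable]: "f \<in> borel_measurable borel" "g \<in> borel_measurable borel"
  shows "inf_conv f g \<in> borel_measurable lebesgue"
proof -
  have "(\<lambda>p::'a \<times> 'a. fst p - snd p) \<in> borel_measurable borel"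
    by (intro borel_measurable_continuous_onI continuous_intros)
  from measurable_compose[OF this assms(1)]
  have [measurable]: "(\<lambda>p::'a \<times> 'a. f (fst p - snd p)) \<in> borel_measurable borel" by (simp add: o_def)
  have "(\<lambda>p::'a \<times> 'a. snd p) \<in> borel_measurable borel"
    by (intro borel_measurable_continuous_onI continuous_intros)
  from measurable_compose[OF this assms(2)]
  have [measurable]: "(\<lambda>p::'a \<times> 'a. g (snd p)) \<in> borel_measurable borel" by (simp add: o_def)
  have "(\<lambda>p::'a \<times> 'a. f (fst p - snd p) + g (snd p)) \<in> borel_measurable borel"
    by measurable
  then have "(\<lambda>x. INF y. f (x - y) + g y) \<in> borel_measurable lebesgue"
    using borel_measurable_lebesgue_INF_borel[of "\<lambda>p. f (fst p - snd p) + g (snd p)"] by simp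
  then show ?thesis by (simp add: inf_conv_def[abs_def])
qed

section \<open>The Luxemburg norm\<close>

lemma borel_measurable_mono_complete_linorder:
  fixes \<phi> :: "'a::{complete_linorder, linorder_topology} \<Rightarrow> 'b::{linorder_topology, second_countable_topology}"
  assumes "mono \<phi>"
  shows "\<phi> \<in> borel_measurable borel"
proof (rule borel_measurableI_less)
  fix a
  define D where "D = {x. \<phi> x < a}"
  have down_closed: "z \<in> D" if "x \<in> D" "z \<le> x" for x z
    using that assms by (auto simp: D_def mono_def intro: le_less_trans)
  have "D = {..Sup D} \<or> D = {..<Sup D}"
  proof (cases "Sup D \<in> D")
    case True
    then show ?thesis using down_closed by (auto intro: Sup_upper)
  next
    case False
    have "D = {..<Sup D}"
    proof safe
      fix z assume "z \<in> D"
      then show "z < Sup D" using False Sup_upper[of z D] by (metis order.not_eq_order_implies_strict)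
    next
      fix z assume "z < Sup D"
      then show "z \<in> D" using down_closed by (auto simp: less_Sup_iff)
    qed
    then show ?thesis ..
  qed
  then have "D \<in> sets borel" by (metis borel_closed borel_open closed_atMost open_lessThan)
  then show "{x \<in> space borel. \<phi> x < a} \<in> sets borel" by (simp add: D_def)
qed

lemma young_function_sup_continuous: "young_function \<phi> \<Longrightarrow> sup_continuous \<phi>"
  unfolding young_function_def
  by (intro continuous_at_left_imp_sup_continuous) (auto simp: continuous_within)

lemma luxemburg_norm_leI:
  assumes "\<And>r. 0 < r \<Longrightarrow> t < ennreal r \<Longrightarrow> (\<integral>\<^sup>+x. \<phi> (ennreal (1 / r) * w x) \<partial>lebesgue) \<le> 1"
  shows "luxemburg_norm \<phi> w \<le> t"
proof (rule ennreal_le_epsilon)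
  fix e :: real assume t: "t < top" and e: "0 < e"
  define r where "r = enn2real t + e"
  have "0 < r" using e enn2real_nonneg[of t] unfolding r_def by linarith
  have "ennreal r = ennreal (enn2real t) + ennreal e"
    unfolding r_def using e by (intro ennreal_plus) auto
  then have r: "ennreal r = t + ennreal e" using t by simp
  then have "t < ennreal r" using t e by (simp add: ennreal_add_left_cancel_less)
  then have "luxemburg_norm \<phi> w \<le> ennreal r"
    unfolding luxemburg_norm_def using assms \<open>0 < r\<close> by (blast intro: Inf_lower)
  then show "luxemburg_norm \<phi> w \<le> t + ennreal e" using r by simp
qed

lemma luxemburg_norm_less_imp_nn_integral_le:
  assumes "mono \<phi>" and "luxemburg_norm \<phi> w < ennreal r"
  shows "(\<integral>\<^sup>+x. \<phi> (ennreal (1 / r) * w x) \<partial>lebesgue) \<le> 1"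
proof -
  obtain r0 where "0 < r0" "ennreal r0 < ennreal r"
    and r0: "(\<integral>\<^sup>+x. \<phi> (ennreal (1 / r0) * w x) \<partial>lebesgue) \<le> 1"
    using assms(2) unfolding luxemburg_norm_def Inf_less_iff by blast
  then have "ennreal (1 / r) \<le> ennreal (1 / r0)"
    by (intro ennreal_leI frac_le) (auto simp: ennreal_less_iff)
  then have "(\<integral>\<^sup>+x. \<phi> (ennreal (1 / r) * w x) \<partial>lebesgue) \<le> (\<integral>\<^sup>+x. \<phi> (ennreal (1 / r0) * w x) \<partial>lebesgue)"
    using \<open>mono \<phi>\<close> by (intro nn_integral_mono monoD[OF \<open>mono \<phi>\<close>] mult_right_mono) auto
  with r0 show ?thesis by simp
qed

lemma luxemburg_norm_mono:
  assumes "mono \<phi>" and "\<And>x. v x \<le> w x"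
  shows "luxemburg_norm \<phi> v \<le> luxemburg_norm \<phi> w"
  unfolding luxemburg_norm_def
proof (rule Inf_superset_mono, safe)
  fix r :: real assume "0 < r" and w: "(\<integral>\<^sup>+x. \<phi> (ennreal (1 / r) * w x) \<partial>lebesgue) \<le> 1"
  have "(\<integral>\<^sup>+x. \<phi> (ennreal (1 / r) * v x) \<partial>lebesgue) \<le> (\<integral>\<^sup>+x. \<phi> (ennreal (1 / r) * w x) \<partial>lebesgue)"
    using assms by (intro nn_integral_mono monoD[OF \<open>mono \<phi>\<close>] mult_left_mono) auto
  with \<open>0 < r\<close> w show "\<exists>r'. ennreal r = ennreal r' \<and> 0 < r' \<and> (\<integral>\<^sup>+x. \<phi> (ennreal (1 / r') * v x) \<partial>lebesgue) \<le> 1"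
    by auto
qed

lemma luxemburg_norm_mult_le:
  assumes "mono \<phi>" and "0 < c"
  shows "luxemburg_norm \<phi> (\<lambda>x. ennreal c * w x) \<le> ennreal c * luxemburg_norm \<phi> w"
proof (rule luxemburg_norm_leI)
  fix r :: real assume "0 < r" and r: "ennreal c * luxemburg_norm \<phi> w < ennreal r"
  have "luxemburg_norm \<phi> w < ennreal (r / c)"
  proof (rule ccontr)
    assume "\<not> luxemburg_norm \<phi> w < ennreal (r / c)"
    then have "ennreal c * ennreal (r / c) \<le> ennreal c * luxemburg_norm \<phi> w"
      by (intro mult_left_mono) auto
    moreover have "ennreal c * ennreal (r / c) = ennreal r"
      using \<open>0 < r\<close> \<open>0 < c\<close> by (simp flip: ennreal_mult)
    ultimately show False using r by simp
  qed
  then have "(\<integral>\<^sup>+x. \<phi> (ennreal (1 / (r / c)) * w x) \<partial>lebesgue) \<le> 1"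
    by (rule luxemburg_norm_less_imp_nn_integral_le[OF \<open>mono \<phi>\<close>])
  moreover have "ennreal (1 / (r / c)) = ennreal (1 / r) * ennreal c"
    using \<open>0 < r\<close> \<open>0 < c\<close> by (simp flip: ennreal_mult)
  ultimately show "(\<integral>\<^sup>+x. \<phi> (ennreal (1 / r) * (ennreal c * w x)) \<partial>lebesgue) \<le> 1"
    by (simp add: mult.assoc)
qed

lemma nn_integral_lebesgue_translate:
  fixes k :: "'a::euclidean_space \<Rightarrow> ennreal"
  assumes k: "k \<in> borel_measurable lebesgue"
  shows "(\<integral>\<^sup>+x. k (x + y) \<partial>lebesgue) = (\<integral>\<^sup>+x. k x \<partial>lebesgue)"
proof -
  define T where "T = (\<lambda>x::'a. y + (\<Sum>j\<in>Basis. (1 * (x \<bullet> j)) *\<^sub>R j))"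
  have T: "T = (\<lambda>x. y + x)" by (simp add: T_def euclidean_representation)
  have "lebesgue = density (distr lebesgue lebesgue T) (\<lambda>_. (\<Prod>j\<in>(Basis::'a set). \<bar>1::real\<bar>))"
    unfolding T_def by (rule lebesgue_affine_euclidean) simp
  then have "(\<integral>\<^sup>+x. k x \<partial>lebesgue) = (\<integral>\<^sup>+x. k x \<partial>distr lebesgue lebesgue T)"
    by (simp add: density_1)
  also have "\<dots> = (\<integral>\<^sup>+x. k (T x) \<partial>lebesgue)"
  proof (rule nn_integral_distr)
    show "T \<in> lebesgue \<rightarrow>\<^sub>M lebesgue"
      unfolding T_def by (rule lebesgue_affine_measurable) simp
    have "measurable (distr lebesgue lebesgue T) borel = measurable lebesgue borel"
      by (rule measurable_cong_sets) auto
    then show "k \<in> borel_measurable (distr lebesgue lebesgue T)" using k by simp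
  qed
  finally show ?thesis by (simp add: T add.commute)
qed

lemma luxemburg_norm_translate:
  fixes w :: "'a::euclidean_space \<Rightarrow> ennreal"
  assumes "mono \<phi>" and [measurable]: "w \<in> borel_measurable lebesgue"
  shows "luxemburg_norm \<phi> (\<lambda>x. w (x + y)) = luxemburg_norm \<phi> w"
proof -
  have [measurable]: "\<phi> \<in> borel_measurable borel"
    by (rule borel_measurable_mono_complete_linorder[OF \<open>mono \<phi>\<close>])
  have "(\<integral>\<^sup>+x. \<phi> (ennreal (1 / r) * w (x + y)) \<partial>lebesgue) = (\<integral>\<^sup>+x. \<phi> (ennreal (1 / r) * w x) \<partial>lebesgue)"
    for r :: real
    by (rule nn_integral_lebesgue_translate[of "\<lambda>x. \<phi> (ennreal (1 / r) * w x)"]) measurable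
  then show ?thesis by (simp add: luxemburg_norm_def)
qed

text \<open>The Fatou property: the only place where the left continuity of \<open>\<phi>\<close> is used.\<close>

lemma luxemburg_norm_SUP_le:
  assumes \<phi>: "sup_continuous \<phi>" and "incseq w"
    and [measurable]: "\<And>n. w n \<in> borel_measurable lebesgue"
    and bound: "\<And>n. luxemburg_norm \<phi> (w n) \<le> t"
  shows "luxemburg_norm \<phi> (\<lambda>x. SUP n. w n x) \<le> t"
proof (rule luxemburg_norm_leI)
  fix r :: real assume "0 < r" "t < ennreal r"
  have mono: "mono \<phi>" using \<phi> by (rule sup_continuous_mono)
  have [measurable]: "\<phi> \<in> borel_measurable borel"
    by (rule borel_measurable_mono_complete_linorder[OF mono])
  have inc: "incseq (\<lambda>n x. \<phi> (ennreal (1 / r) * w n x))"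
    using \<open>incseq w\<close> mono by (auto simp: incseq_def le_fun_def intro!: monoD[OF mono] mult_left_mono)
  have "(\<integral>\<^sup>+x. \<phi> (ennreal (1 / r) * (SUP n. w n x)) \<partial>lebesgue)
      = (\<integral>\<^sup>+x. (SUP n. \<phi> (ennreal (1 / r) * w n x)) \<partial>lebesgue)"
  proof (rule nn_integral_cong)
    fix x
    have "incseq (\<lambda>n. ennreal (1 / r) * w n x)"
      using \<open>incseq w\<close> by (auto simp: incseq_def le_fun_def intro!: mult_left_mono)
    then have "\<phi> (SUP n. ennreal (1 / r) * w n x) = (SUP n. \<phi> (ennreal (1 / r) * w n x))"
      by (rule sup_continuousD[OF \<phi>])
    then show "\<phi> (ennreal (1 / r) * (SUP n. w n x)) = (SUP n. \<phi> (ennreal (1 / r) * w n x))"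
      by (simp add: SUP_mult_left_ennreal)
  qed
  also have "\<dots> = (SUP n. \<integral>\<^sup>+x. \<phi> (ennreal (1 / r) * w n x) \<partial>lebesgue)"
    using inc by (intro nn_integral_monotone_convergence_SUP) auto
  also have "\<dots> \<le> 1"
    using bound \<open>t < ennreal r\<close>
    by (intro SUP_least luxemburg_norm_less_imp_nn_integral_le[OF mono]) (rule le_less_trans)
  finally show "(\<integral>\<^sup>+x. \<phi> (ennreal (1 / r) * (SUP n. w n x)) \<partial>lebesgue) \<le> 1" .
qed

lemma ennreal_inverse_antimono:
  fixes a b :: ennreal
  assumes "a \<le> b"
  shows "inverse b \<le> inverse a"
proof (cases "b = top")
  case False
  then obtain y where y: "b = ennreal y" "0 \<le> y" by (cases b rule: ennreal_cases) auto
  then obtain x where x: "a = ennreal x" "0 \<le> x" "x \<le> y" using assms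
    by (cases a rule: ennreal_cases) (auto simp: ennreal_le_iff top_unique)
  show ?thesis
  proof (cases "x = 0")
    case False
    with x y show ?thesis by (simp add: inverse_ennreal ennreal_leI le_imp_inverse_le)
  qed (use x in simp)
qed simp

lemma ennreal_inverse_eq_SUP: "inverse a = (SUP n. inverse (a + ennreal (1 / Suc n)))"
proof -
  have "(\<lambda>n. a + ennreal (1 / Suc n)) \<longlonglongrightarrow> a + ennreal 0"
    by (intro tendsto_intros LIMSEQ_Suc[OF lim_const_over_n])
  moreover have "continuous_on UNIV (inverse :: ennreal \<Rightarrow> ennreal)"
    using continuous_on_inverse_ennreal[OF continuous_on_id] by simp
  ultimately have "(\<lambda>n. inverse (a + ennreal (1 / Suc n))) \<longlonglongrightarrow> inverse a"
    using continuous_on_tendsto_compose[of UNIV inverse] by simp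
  moreover have "incseq (\<lambda>n. inverse (a + ennreal (1 / Suc n)))"
    by (intro incseq_SucI ennreal_inverse_antimono add_left_mono ennreal_leI) (simp add: field_simps)
  ultimately show ?thesis by (rule LIMSEQ_unique[OF _ LIMSEQ_SUP])
qed

lemma e2ennreal_mult_add:
  assumes "0 \<le> u" "0 \<le> c" "0 \<le> e"
  shows "e2ennreal (ereal c * u + ereal e) = ennreal c * e2ennreal u + ennreal e"
  using assms by (cases u) (auto simp: ennreal_plus ennreal_mult ennreal_mult_top)

text \<open>The \<open>\<epsilon>\<close>-enlargements are removed by the Fatou property, since \<open>1/(c u + \<epsilon>)\<close> increases to
  \<open>1/(c u)\<close> as \<open>\<epsilon> \<down> 0\<close>.\<close>

lemma luxemburg_norm_recip_le_of_translates:
  fixes u h :: "'a::euclidean_space \<Rightarrow> ereal"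
  assumes \<phi>: "young_function \<phi>" and "0 < c"
    and [measurable]: "u \<in> borel_measurable lebesgue" "h \<in> borel_measurable lebesgue"
    and u_nonneg: "\<And>z. 0 \<le> u z"
    and translate: "\<And>e. 0 < e \<Longrightarrow> \<exists>y. \<forall>z. h (z + y) \<le> ereal c * u z + ereal e"
  shows "luxemburg_norm \<phi> (recip u) \<le> ennreal c * luxemburg_norm \<phi> (recip h)"
proof -
  have sc: "sup_continuous \<phi>" by (rule young_function_sup_continuous[OF \<phi>])
  then have mono: "mono \<phi>" by (rule sup_continuous_mono)
  define w where "w n z = inverse (ennreal c * e2ennreal (u z) + ennreal (1 / Suc n))" for n z
  have w_le: "luxemburg_norm \<phi> (w n) \<le> luxemburg_norm \<phi> (recip h)" for n
  proof -
    obtain y where y: "\<And>z. h (z + y) \<le> ereal c * u z + ereal (1 / Suc n)"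
      using translate[of "1 / Suc n"] by auto
    have "w n z \<le> recip h (z + y)" for z
    proof -
      have "w n z = inverse (e2ennreal (ereal c * u z + ereal (1 / Suc n)))"
        unfolding w_def using \<open>0 < c\<close> u_nonneg by (simp add: e2ennreal_mult_add)
      also have "\<dots> \<le> recip h (z + y)"
        unfolding recip_def by (intro ennreal_inverse_antimono e2ennreal_mono y)
      finally show ?thesis .
    qed
    then have "luxemburg_norm \<phi> (w n) \<le> luxemburg_norm \<phi> (\<lambda>z. recip h (z + y))"
      by (rule luxemburg_norm_mono[OF mono])
    also have "\<dots> = luxemburg_norm \<phi> (recip h)"
      by (rule luxemburg_norm_translate[OF mono]) (unfold recip_def, measurable)
    finally show ?thesis .
  qed
  have "incseq w"
    unfolding w_def
    by (intro incseq_SucI le_funI ennreal_inverse_antimono add_left_mono ennreal_leI) (simp add: field_simps)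
  moreover have "(SUP n. w n z) = ennreal (1 / c) * recip u z" for z
  proof -
    have "(SUP n. w n z) = inverse (ennreal c * e2ennreal (u z))"
      unfolding w_def by (rule ennreal_inverse_eq_SUP[symmetric])
    also have "\<dots> = ennreal (1 / c) * recip u z"
      using \<open>0 < c\<close> by (simp add: ennreal_inverse_mult' inverse_ennreal recip_def divide_inverse)
    finally show ?thesis .
  qed
  moreover have "w n \<in> borel_measurable lebesgue" for n
    unfolding w_def by measurable
  ultimately have "luxemburg_norm \<phi> (\<lambda>z. ennreal (1 / c) * recip u z) \<le> luxemburg_norm \<phi> (recip h)"
    using luxemburg_norm_SUP_le[OF sc, of w] w_le by simp
  have "luxemburg_norm \<phi> (recip u) = luxemburg_norm \<phi> (\<lambda>z. ennreal c * (ennreal (1 / c) * recip u z))"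
    using \<open>0 < c\<close> by (simp add: mult.assoc[symmetric] ennreal_mult[symmetric])
  also have "\<dots> \<le> ennreal c * luxemburg_norm \<phi> (\<lambda>z. ennreal (1 / c) * recip u z)"
    by (rule luxemburg_norm_mult_le[OF mono \<open>0 < c\<close>])
  also have "\<dots> \<le> ennreal c * luxemburg_norm \<phi> (recip h)"
    using \<open>luxemburg_norm \<phi> (\<lambda>z. ennreal (1 / c) * recip u z) \<le> luxemburg_norm \<phi> (recip h)\<close>
    by (rule mult_left_mono) simp
  finally show ?thesis .
qed

section \<open>The infimal convolution\<close>

lemma inf_conv_commute:
  fixes f g :: "'a::ab_group_add \<Rightarrow> ereal"
  shows "inf_conv f g = inf_conv g f"
proof
  fix x :: 'a
  have surj: "range (\<lambda>y. x - y) = UNIV" by (rule surjI[of _ "\<lambda>y. x - y"]) simp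
  have reindex: "(INF y. h y) = (INF y. h (x - y))" for h :: "'a \<Rightarrow> ereal"
  proof -
    have "(INF y. h (x - y)) = Inf (h ` range (\<lambda>y. x - y))" by (simp only: image_image)
    then show ?thesis by (simp only: surj)
  qed
  show "inf_conv f g x = inf_conv g f x"
    unfolding inf_conv_def reindex[of "\<lambda>y. g (x - y) + f y"] by (simp add: add.commute)
qed

lemma inf_conv_le: "inf_conv f g (x + y) \<le> f x + g y"
  unfolding inf_conv_def by (rule INF_lower2[of y]) auto

lemma inf_conv_nonneg:
  fixes f g :: "'a::ab_group_add \<Rightarrow> ereal"
  assumes "\<And>x. ereal mf \<le> f x" "\<And>x. ereal mg \<le> g x" "0 \<le> mf + mg"
  shows "0 \<le> inf_conv f g x"
  unfolding inf_conv_def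
proof (rule INF_greatest)
  fix y
  have "(0::ereal) \<le> ereal mf + ereal mg" using assms(3) by simp
  also have "\<dots> \<le> f (x - y) + g y" by (intro add_mono assms(1,2))
  finally show "0 \<le> f (x - y) + g y" .
qed

lemma ereal_diff_half_nonneg:
  assumes "ereal a \<le> x" and "0 \<le> a + b"
  shows "0 \<le> x - ereal ((a - b) / 2)"
  using assms by (cases x) auto

text \<open>The shift by \<open>(mf - mg) / 2\<close> is what makes both \<open>f\<close> and \<open>g\<close> bounded
  below by the same constant \<open>(mf + mg) / 2 \<ge> 0\<close>.\<close>

lemma luxemburg_norm_recip_shift_le_inf_conv:
  fixes f g :: "'a::euclidean_space \<Rightarrow> ereal" and mf mg :: real
  assumes \<phi>: "young_function \<phi>"
    and f_meas: "f \<in> borel_measurable borel" and g_meas: "g \<in> borel_measurable borel"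
    and mf: "(INF x. f x) = ereal mf" and mg: "(INF x. g x) = ereal mg" and "0 \<le> mf + mg"
  shows "luxemburg_norm \<phi> (recip (\<lambda>x. f x - ereal ((mf - mg) / 2)))
           \<le> 2 * luxemburg_norm \<phi> (recip (inf_conv f g))"
proof -
  define m where "m = (mf - mg) / 2"
  have f_ge: "ereal mf \<le> f x" for x using mf[symmetric] by (metis INF_lower UNIV_I)
  have g_ge: "ereal mg \<le> g x" for x using mg[symmetric] by (metis INF_lower UNIV_I)
  have "luxemburg_norm \<phi> (recip (\<lambda>x. f x - ereal m)) \<le> ennreal 2 * luxemburg_norm \<phi> (recip (inf_conv f g))"
  proof (rule luxemburg_norm_recip_le_of_translates[OF \<phi>])
    show "(\<lambda>x. f x - ereal m) \<in> borel_measurable lebesgue"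
      using f_meas by (intro measurable_completion) simp
    show "inf_conv f g \<in> borel_measurable lebesgue"
      by (rule inf_conv_borel_measurable_lebesgue[OF f_meas g_meas])
    show "0 \<le> f x - ereal m" for x
      unfolding m_def using f_ge \<open>0 \<le> mf + mg\<close> by (rule ereal_diff_half_nonneg)
    fix e :: real assume "0 < e"
    then have "(INF x. g x) < ereal (mg + e)" using mg by simp
    then obtain y where y: "g y < ereal (mg + e)" by (auto simp: INF_less_iff)
    have "inf_conv f g (z + y) \<le> ereal 2 * (f z - ereal m) + ereal e" for z
    proof -
      have "inf_conv f g (z + y) \<le> f z + g y" by (rule inf_conv_le)
      also have "\<dots> \<le> ereal 2 * (f z - ereal m) + ereal e"
        using f_ge[of z] g_ge[of y] y \<open>0 \<le> mf + mg\<close>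
        by (cases "f z"; cases "g y") (auto simp: m_def field_simps)
      finally show ?thesis .
    qed
    then show "\<exists>y. \<forall>z. inf_conv f g (z + y) \<le> ereal 2 * (f z - ereal m) + ereal e" by blast
  qed simp
  then show ?thesis by (simp add: m_def)
qed

lemma luxemburg_norm_recip_shifts_le_inf_conv:
  fixes f g :: "'a::euclidean_space \<Rightarrow> ereal" and mf mg :: real
  assumes \<phi>: "young_function \<phi>"
    and f_meas: "f \<in> borel_measurable borel" and g_meas: "g \<in> borel_measurable borel"
    and mf: "(INF x. f x) = ereal mf" and mg: "(INF x. g x) = ereal mg" and "0 \<le> mf + mg"
  shows "luxemburg_norm \<phi> (recip (\<lambda>x. f x - ereal ((mf - mg) / 2)))
           + luxemburg_norm \<phi> (recip (\<lambda>x. g x + ereal ((mf - mg) / 2)))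
         \<le> 4 * luxemburg_norm \<phi> (recip (inf_conv f g))"
proof -
  have "ereal ((mf - mg) / 2) = - ereal ((mg - mf) / 2)" by (simp add: field_simps)
  then have g_shift: "g x + ereal ((mf - mg) / 2) = g x - ereal ((mg - mf) / 2)" for x
    by (simp only: minus_ereal_def)
  let ?L = "luxemburg_norm \<phi> (recip (inf_conv f g))"
  have "luxemburg_norm \<phi> (recip (\<lambda>x. f x - ereal ((mf - mg) / 2))) \<le> 2 * ?L"
    using assms by (rule luxemburg_norm_recip_shift_le_inf_conv)
  moreover have "luxemburg_norm \<phi> (recip (\<lambda>x. g x + ereal ((mf - mg) / 2))) \<le> 2 * ?L"
    unfolding g_shift inf_conv_commute[of f] using \<open>0 \<le> mf + mg\<close>
    by (intro luxemburg_norm_recip_shift_le_inf_conv[OF \<phi> g_meas f_meas mg mf]) simp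
  ultimately have "luxemburg_norm \<phi> (recip (\<lambda>x. f x - ereal ((mf - mg) / 2)))
      + luxemburg_norm \<phi> (recip (\<lambda>x. g x + ereal ((mf - mg) / 2))) \<le> 2 * ?L + 2 * ?L"
    by (rule add_mono)
  then show ?thesis by (simp add: distrib_right[symmetric])
qed

theorem theorem7:
  fixes f g :: "'a::euclidean_space \<Rightarrow> ereal" and mf mg :: real
  assumes f_meas: "f \<in> borel_measurable borel" and g_meas: "g \<in> borel_measurable borel"
    and f_nm: "\<And>x. f x \<noteq> -\<infinity>" and g_nm: "\<And>x. g x \<noteq> -\<infinity>"
    and mf: "(INF x. f x) = ereal mf" and mg: "(INF x. g x) = ereal mg"
    and sum_nonneg: "mf + mg \<ge> 0"
  defines "mfg \<equiv> (mf - mg) / 2"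
  shows "(\<lambda>x. f x - ereal mfg) \<in> borel_measurable lebesgue \<and> (\<forall>x. f x - ereal mfg \<ge> 0)
       \<and> (\<lambda>x. g x + ereal mfg) \<in> borel_measurable lebesgue \<and> (\<forall>x. g x + ereal mfg \<ge> 0)
       \<and> inf_conv f g \<in> borel_measurable lebesgue \<and> (\<forall>x. inf_conv f g x \<ge> 0)
       \<and> (\<forall>\<phi>. young_function \<phi> \<longrightarrow>
            luxemburg_norm \<phi> (recip (\<lambda>x. f x - ereal mfg)) + luxemburg_norm \<phi> (recip (\<lambda>x. g x + ereal mfg))
              \<le> 4 * luxemburg_norm \<phi> (recip (inf_conv f g)))"
proof -
  have f_ge: "ereal mf \<le> f x" and g_ge: "ereal mg \<le> g x" for x
    using mf[symmetric] mg[symmetric] by (metis INF_lower UNIV_I)+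
  have "0 \<le> f x - ereal mfg" for x
    unfolding mfg_def using f_ge sum_nonneg by (rule ereal_diff_half_nonneg)
  moreover have "0 \<le> g x + ereal mfg" for x
    using ereal_diff_half_nonneg[OF g_ge[of x], of mf] sum_nonneg
    by (cases "g x") (simp_all add: mfg_def field_simps)
  moreover have "0 \<le> inf_conv f g x" for x
    using f_ge g_ge sum_nonneg by (rule inf_conv_nonneg)
  moreover have "(\<lambda>x. f x - ereal mfg) \<in> borel_measurable lebesgue"
    "(\<lambda>x. g x + ereal mfg) \<in> borel_measurable lebesgue"
    using f_meas g_meas by (auto intro!: measurable_completion)
  moreover have "inf_conv f g \<in> borel_measurable lebesgue"
    using f_meas g_meas by (rule inf_conv_borel_measurable_lebesgue)
  moreover note luxemburg_norm_recip_shifts_le_inf_conv[OF _ f_meas g_meas mf mg sum_nonneg]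
  ultimately show ?thesis unfolding mfg_def by blast
qed

end
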